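(* Let $\mathcal{C}$ be a polyhedral complex in $\mathbb{R}^n$ all of whose cells are pointed. Then: (a) if $P_1,P_2\in\mathcal{C}$ and $p\in P_1\cap P_2$, then $\mathrm{base}_{P_1}(p)=\mathrm{base}_{P_2}(p)$, so $\mathrm{base}_{\mathcal{C}}:|\mathcal{C}|\to|\mathrm{com.part}(\mathcal{C})|$, $\mathrm{base}_{\mathcal{C}}(p)=\mathrm{base}_P(p)$ for any cell $P\ni p$, is well defined; (b) $\mathrm{base}_{\mathcal{C}}$ is continuous; and (c) $\Phi(p,t)=t\,\mathrm{base}_{\mathcal{C}}(p)+(1-t)p$ is a strong deformation retraction of $|\mathcal{C}|$ onto $|\mathrm{com.part}(\mathcal{C})|$.
   Context: A polyhedral complex is a finite set of polyhedral sets (cells) closed under taking faces in which any two cells intersect in a common face; $|\mathcal{C}|$ is the union of cells. For a polyhedral set $P$, $\mathrm{char.cone}(P)=\{y:x+y\in P\ \forall x\in P\}$; $P$ is pointed if $\mathrm{char.cone}(P)\cap-\mathrm{char.cone}(P)=\{0\}$. $K_P$ is the convex hull of the vertices of $P$, $\widetilde K_P$ the set of all faces of $K_P$, and $\mathrm{com.part}(\mathcal{C})=\bigcup_{C\in\mathcal{C}}\widetilde K_C$, with $|\mathrm{com.part}(\mathcal{C})|=\bigcup_C K_C$. For $p\in P$, $\mathrm{base}_P(p)$ is the unique point $x\in K_P$ with $p-x\in\mathrm{char.cone}(P)$ minimizing $|p-x|$. A strong deformation retraction of $X$ onto $A$ is a continuous $H:X\times[0,1]\to X$ with $H(x,0)=x$,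 $H(x,1)\in A$, $H(a,t)=a$ for $a\in A$. *)

theory Defs
  imports "HOL-Analysis.Analysis"
begin

definition polyhedral_complex :: "'a::euclidean_space set set \<Rightarrow> bool" where
  "polyhedral_complex \<C> \<longleftrightarrow>
     finite \<C> \<and>
     (\<forall>P\<in>\<C>. polyhedron P \<and> P \<noteq> {}) \<and>
     (\<forall>P F. P \<in> \<C> \<and> F face_of P \<and> F \<noteq> {} \<longrightarrow> F \<in> \<C>) \<and>
     (\<forall>P Q. P \<in> \<C> \<and> Q \<in> \<C> \<longrightarrow> (P \<inter> Q) face_of P \<and> (P \<inter> Q) face_of Q)"

definition char_cone :: "'a::real_vector set \<Rightarrow> 'a set" where
  "char_cone P = {y. \<forall>x\<in>P. x + y \<in> P}"

definition pointed :: "'a::real_vector set \<Rightarrow> bool" where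
  "pointed P \<longleftrightarrow> char_cone P \<inter> uminus ` char_cone P = {0}"

definition vertices :: "'a::real_vector set \<Rightarrow> 'a set" where
  "vertices P = {v. v extreme_point_of P}"

definition KP :: "'a::real_vector set \<Rightarrow> 'a set" where
  "KP P = convex hull (vertices P)"

definition com_part :: "'a::real_vector set set \<Rightarrow> 'a set set" where
  "com_part \<C> = (\<Union>P\<in>\<C>. {F. F face_of KP P})"

definition base :: "'a::real_normed_vector set \<Rightarrow> 'a \<Rightarrow> 'a" where
  "base P p = (THE x. x \<in> KP P \<and> p - x \<in> char_cone P \<and>
       (\<forall>y\<in>KP P. p - y \<in> char_cone P \<longrightarrow> norm (p - x) \<le> norm (p - y)))"

definition base_complex :: "'a::real_normed_vector set set \<Rightarrow> 'a \<Rightarrow> 'a" where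
  "base_complex \<C> p = base (SOME P. P \<in> \<C> \<and> p \<in> P) p"

definition strong_deformation_retraction ::
    "'a::topological_space set \<Rightarrow> 'a set \<Rightarrow> ('a \<times> real \<Rightarrow> 'a) \<Rightarrow> bool" where
  "strong_deformation_retraction X A H \<longleftrightarrow>
     A \<subseteq> X \<and>
     continuous_on (X \<times> {0..1}) H \<and> H ` (X \<times> {0..1}) \<subseteq> X \<and>
     (\<forall>x\<in>X. H (x, 0) = x) \<and> (\<forall>x\<in>X. H (x, 1) \<in> A) \<and>
     (\<forall>a\<in>A. \<forall>t\<in>{0..1}. H (a, t) = a)"

end

(*
  Writing a pointed polyhedron P as a finite system of linear inequalities, every point p of P
  is a point of K_P plus a direction of char.cone(P), so base_P(p) is the nearest point to p
  of the nonempty compact convex set K_P \<inter> (p - char.cone(P)).  For a face F of P containing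
  p this set is the same for F as for P; since two cells meet in a common face, this gives (a).
  The function p \<mapsto> |p - base_P(p)| is convex on P, hence upper semicontinuous there (a
  polyhedron is locally a cone), and together with compactness of K_P this makes the graph of
  base_P closed, so base_P is continuous; the finitely many closed cells glue these maps.
  Finally base_C fixes com.part(C) pointwise and the segment from p to base_C(p) stays in a cell
  containing p, so the straight-line homotopy is a strong deformation retraction.
*)
theory Submission
  imports Defs
begin

section \<open>Characteristic cones\<close>

lemma char_cone_zero [simp]: "0 \<in> char_cone P"
  by (simp add: char_cone_def)

lemma char_cone_add: "y \<in> char_cone P \<Longrightarrow> z \<in> char_cone P \<Longrightarrow> y + z \<in> char_cone P"
  unfolding char_cone_def by (simp add: add.assoc[symmetric])

lemma add_of_nat_scaleR_char_cone:
  "y \<in> char_cone P \<Longrightarrow> x \<in> P \<Longrightarrow> x + of_nat n *\<^sub>R y \<in> P"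
proof (induction n)
  case (Suc n)
  then have "x + of_nat n *\<^sub>R y + y \<in> P" unfolding char_cone_def by blast
  then show ?case by (simp add: algebra_simps)
qed simp

lemma char_cone_scaleR:
  assumes "convex P" "y \<in> char_cone P" "t \<ge> 0"
  shows "t *\<^sub>R y \<in> char_cone P"
  unfolding char_cone_def
proof (intro CollectI ballI)
  fix x assume x: "x \<in> P"
  define n where "n = nat \<lceil>t\<rceil>"
  have tn: "t \<le> real n" unfolding n_def by linarith
  show "x + t *\<^sub>R y \<in> P"
  proof (cases "n = 0")
    case True
    with tn assms(3) x show ?thesis by simp
  next
    case False
    then have n: "real n > 0" by simp
    have "(1 - t / n) *\<^sub>R x + (t / n) *\<^sub>R (x + real n *\<^sub>R y) \<in> P"
      using n tn assms(3)
      by (intro convexD[OF assms(1) x add_of_nat_scaleR_char_cone[OF assms(2) x, simplified]])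
         (simp_all add: field_simps)
    moreover have "(1 - t / n) *\<^sub>R x + (t / n) *\<^sub>R (x + real n *\<^sub>R y) = x + t *\<^sub>R y"
      using n by (simp add: algebra_simps)
    ultimately show ?thesis by simp
  qed
qed

lemma convex_char_cone: "convex P \<Longrightarrow> convex (char_cone P)"
  unfolding convex_def[of "char_cone P"] by (simp add: char_cone_add char_cone_scaleR)

lemma closed_char_cone:
  fixes P :: "'a::real_normed_vector set"
  assumes "closed P"
  shows "closed (char_cone P)"
proof -
  have "char_cone P = (\<Inter>x\<in>P. (\<lambda>y. x + y) -` P)"
    unfolding char_cone_def by auto
  moreover have "closed ((\<lambda>y. x + y) -` P)" for x
    by (intro closed_vimage assms continuous_intros)
  ultimately show ?thesis by auto
qed

text \<open>The ray from any other point \<open>y\<close> is a limit of chords from \<open>y\<close> to points of the given ray.\<close>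
lemma char_cone_of_ray:
  fixes P :: "'a::real_normed_vector set"
  assumes "closed P" "convex P" "f \<in> P" "\<And>n::nat. f + of_nat n *\<^sub>R c \<in> P"
  shows "c \<in> char_cone P"
  unfolding char_cone_def
proof (intro CollectI ballI)
  fix y assume y: "y \<in> P"
  define z where "z n = y + c + inverse (real (Suc n)) *\<^sub>R (f - y)" for n
  have "z n \<in> P" for n
  proof -
    define i where "i = inverse (real (Suc n))"
    have "(1 - i) *\<^sub>R y + i *\<^sub>R (f + of_nat (Suc n) *\<^sub>R c) \<in> P"
      by (rule convexD[OF assms(2) y assms(4)]) (simp_all add: i_def field_simps)
    moreover have "i *\<^sub>R (of_nat (Suc n) *\<^sub>R c) = c"
      by (simp add: i_def)
    then have "(1 - i) *\<^sub>R y + i *\<^sub>R (f + of_nat (Suc n) *\<^sub>R c) = z n"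
      by (simp add: z_def i_def algebra_simps)
    ultimately show ?thesis by simp
  qed
  moreover have "z \<longlonglongrightarrow> y + c + 0 *\<^sub>R (f - y)"
    unfolding z_def by (intro tendsto_intros LIMSEQ_inverse_real_of_nat)
  ultimately have "y + c + 0 *\<^sub>R (f - y) \<in> P"
    by (rule closed_sequentially[OF assms(1)])
  then show "y + c \<in> P" by simp
qed

lemma char_cone_of_inequalities:
  fixes H :: "('a::real_inner \<times> real) set"
  assumes "P = {x. \<forall>h\<in>H. fst h \<bullet> x \<le> snd h}" "\<forall>h\<in>H. fst h \<bullet> d \<le> 0"
  shows "d \<in> char_cone P"
  unfolding char_cone_def
proof (intro CollectI ballI)
  fix x assume "x \<in> P"
  have "fst h \<bullet> (x + d) \<le> snd h" if "h \<in> H" for h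
  proof -
    have "fst h \<bullet> x \<le> snd h" "fst h \<bullet> d \<le> 0" using \<open>x \<in> P\<close> assms that by auto
    then show ?thesis by (simp add: inner_add_right)
  qed
  then show "x + d \<in> P" using assms(1) by blast
qed

lemma pointed_char_cone_uminus:
  assumes "pointed P" "d \<in> char_cone P" "- d \<in> char_cone P"
  shows "d = 0"
proof -
  have "d \<in> uminus ` char_cone P" using assms(3) by (metis image_eqI minus_minus)
  with assms show ?thesis unfolding pointed_def by blast
qed

section \<open>Decomposition of pointed polyhedra\<close>

lemma polyhedron_as_inequalities:
  fixes P :: "'a::euclidean_space set"
  assumes "polyhedron P"
  obtains H :: "('a \<times> real) set" where "finite H" "P = {x. \<forall>h\<in>H. fst h \<bullet> x \<le> snd h}"
proof -
  obtain F where F: "finite F" "P = \<Inter>F" "\<forall>h\<in>F. \<exists>a b. a \<noteq> 0 \<and> h = {x. a \<bullet> x \<le> b}"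
    using assms unfolding polyhedron_def by blast
  then have "\<forall>h\<in>F. \<exists>ab. h = {x. fst ab \<bullet> x \<le> snd ab}"
    by (metis fst_conv snd_conv)
  then obtain ab where ab: "\<forall>h\<in>F. h = {x. fst (ab h) \<bullet> x \<le> snd (ab h)}"
    by metis
  have "P = {x. \<forall>h\<in>ab ` F. fst h \<bullet> x \<le> snd h}"
    using F(2) ab by auto
  with F(1) that show ?thesis by blast
qed

definition slack :: "('a::real_inner \<times> real) set \<Rightarrow> 'a \<Rightarrow> ('a \<times> real) set" where
  "slack H x = {h\<in>H. fst h \<bullet> x < snd h}"

lemma move_until_tight:
  fixes H :: "('a::real_inner \<times> real) set"
  assumes fin: "finite H" and P: "P = {x. \<forall>h\<in>H. fst h \<bullet> x \<le> snd h}" and x: "x \<in> P"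
    and tight: "\<forall>h\<in>H. fst h \<bullet> x = snd h \<longrightarrow> fst h \<bullet> d = 0"
    and pos: "\<exists>h\<in>H. fst h \<bullet> d > 0"
  obtains t where "t > 0" "x + t *\<^sub>R d \<in> P" "card (slack H (x + t *\<^sub>R d)) < card (slack H x)"
proof -
  define J where "J = {h\<in>H. fst h \<bullet> d > 0}"
  define r where "r h = (snd h - fst h \<bullet> x) / (fst h \<bullet> d)" for h
  define t where "t = Min (r ` J)"
  have xle: "fst h \<bullet> x \<le> snd h" if "h \<in> H" for h using x that unfolding P by blast
  have J_slack: "J \<subseteq> slack H x"
    using tight xle unfolding J_def slack_def by force
  have "finite J" "J \<noteq> {}" using fin pos unfolding J_def by auto
  then obtain h0 where h0: "h0 \<in> J" "r h0 = t" and t_le: "\<And>h. h \<in> J \<Longrightarrow> t \<le> r h"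
    unfolding t_def by (metis (mono_tags, lifting) Min_in Min_le finite_imageI image_iff image_is_empty)
  have t: "t > 0"
    using h0 J_slack unfolding J_def slack_def r_def by (auto intro: divide_pos_pos)
  have inner_move: "fst h \<bullet> (x + t *\<^sub>R d) = fst h \<bullet> x + t * (fst h \<bullet> d)" for h
    by (simp add: inner_add_right)
  have "fst h \<bullet> (x + t *\<^sub>R d) \<le> snd h" if h: "h \<in> H" for h
  proof (cases "h \<in> J")
    case True
    then have "t * (fst h \<bullet> d) \<le> r h * (fst h \<bullet> d)"
      using t_le unfolding J_def by (intro mult_right_mono) auto
    also have "\<dots> = snd h - fst h \<bullet> x"
      using True unfolding J_def r_def by simp
    finally show ?thesis unfolding inner_move by linarith
  next
    case False
    then have "t * (fst h \<bullet> d) \<le> 0"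
      using h t unfolding J_def by (simp add: mult_nonneg_nonpos)
    then show ?thesis unfolding inner_move using xle[OF h] by linarith
  qed
  then have moved: "x + t *\<^sub>R d \<in> P" unfolding P by blast
  have "slack H (x + t *\<^sub>R d) \<subseteq> slack H x"
    using tight xle unfolding slack_def inner_move by fastforce
  moreover have "h0 \<in> slack H x - slack H (x + t *\<^sub>R d)"
    using h0 J_slack unfolding slack_def J_def r_def inner_move by auto
  ultimately have "slack H (x + t *\<^sub>R d) \<subset> slack H x" by blast
  then have "card (slack H (x + t *\<^sub>R d)) < card (slack H x)"
    by (rule psubset_card_mono[rotated]) (simp add: fin slack_def)
  with t moved that show ?thesis by blast
qed

lemma convex_combination_eq_upper_bound:
  fixes s u v b :: real
  assumes "0 < s" "s < 1" "u \<le> b" "v \<le> b" "(1 - s) * u + s * v = b"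
  shows "u = b" "v = b"
proof -
  have "(1 - s) * u \<le> (1 - s) * b" "s * v \<le> s * b"
    using assms by (simp_all add: mult_left_mono)
  moreover have "(1 - s) * u + s * v = (1 - s) * b + s * b"
    using assms(5) by (simp add: algebra_simps)
  ultimately have "(1 - s) * u = (1 - s) * b" "s * v = s * b" by linarith+
  then show "u = b" "v = b" using assms(1,2) by simp_all
qed

lemma extreme_point_of_inequalities:
  fixes H :: "('a::real_inner \<times> real) set"
  assumes P: "P = {x. \<forall>h\<in>H. fst h \<bullet> x \<le> snd h}" and x: "x \<in> P"
    and unique: "\<And>z. z \<in> P \<Longrightarrow> \<forall>h\<in>H. fst h \<bullet> x = snd h \<longrightarrow> fst h \<bullet> z = snd h \<Longrightarrow> z = x"
  shows "x extreme_point_of P"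
  unfolding extreme_point_of_def
proof (intro conjI ballI x notI)
  fix u v assume u: "u \<in> P" and v: "v \<in> P" and "x \<in> open_segment u v"
  then obtain s where s: "0 < s" "s < 1" "x = (1 - s) *\<^sub>R u + s *\<^sub>R v" and "u \<noteq> v"
    by (auto simp: in_segment)
  have "fst h \<bullet> u = snd h \<and> fst h \<bullet> v = snd h" if "h \<in> H" "fst h \<bullet> x = snd h" for h
    using convex_combination_eq_upper_bound[OF s(1,2), of "fst h \<bullet> u" "snd h" "fst h \<bullet> v"]
      u v that unfolding P s(3) by (auto simp: inner_add_right)
  then have "u = x" "v = x" using unique u v by blast+
  with \<open>u \<noteq> v\<close> show False by simp
qed

definition base_candidates :: "'a::real_normed_vector set \<Rightarrow> 'a \<Rightarrow> 'a set" where
  "base_candidates P p = {x \<in> KP P. p - x \<in> char_cone P}"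

lemma convex_KP: "convex (KP P)"
  unfolding KP_def by (rule convex_convex_hull)

lemma KP_subset: "convex P \<Longrightarrow> KP P \<subseteq> P"
  unfolding KP_def vertices_def by (rule hull_minimal) (auto simp: extreme_point_of_def)

lemma compact_KP:
  fixes P :: "'a::euclidean_space set"
  assumes "polyhedron P"
  shows "compact (KP P)"
  unfolding KP_def vertices_def
  using finite_polyhedron_extreme_points[OF assms] by (rule finite_imp_compact_convex_hull)

lemma base_candidates_add_char_cone:
  assumes "k \<in> base_candidates P p" "c \<in> char_cone P"
  shows "k \<in> base_candidates P (p + c)"
proof -
  have "(p - k) + c \<in> char_cone P"
    using assms by (intro char_cone_add) (auto simp: base_candidates_def)
  moreover have "(p - k) + c = (p + c) - k" by simp
  ultimately show ?thesis using assms(1) unfolding base_candidates_def by simp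
qed

lemma base_candidates_convex_combination:
  assumes "convex P" "k \<in> base_candidates P p" "l \<in> base_candidates P q" "0 \<le> u" "u \<le> 1"
  shows "(1 - u) *\<^sub>R k + u *\<^sub>R l \<in> base_candidates P ((1 - u) *\<^sub>R p + u *\<^sub>R q)"
proof -
  have "(1 - u) *\<^sub>R k + u *\<^sub>R l \<in> KP P"
    using assms by (intro convexD[OF convex_KP]) (auto simp: base_candidates_def)
  moreover have "(1 - u) *\<^sub>R (p - k) + u *\<^sub>R (q - l) \<in> char_cone P"
    using assms by (intro convexD[OF convex_char_cone]) (auto simp: base_candidates_def)
  moreover have "(1 - u) *\<^sub>R (p - k) + u *\<^sub>R (q - l)
      = ((1 - u) *\<^sub>R p + u *\<^sub>R q) - ((1 - u) *\<^sub>R k + u *\<^sub>R l)"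
    by (simp add: algebra_simps)
  ultimately show ?thesis unfolding base_candidates_def by simp
qed

lemma base_candidates_behind:
  assumes "convex P" "e \<in> char_cone P" "t \<ge> 0" "base_candidates P (x - t *\<^sub>R e) \<noteq> {}"
  shows "base_candidates P x \<noteq> {}"
proof -
  have "t *\<^sub>R e \<in> char_cone P" using char_cone_scaleR[OF assms(1-3)] .
  then show ?thesis
    using assms(4) base_candidates_add_char_cone[of _ P "x - t *\<^sub>R e" "t *\<^sub>R e"] by auto
qed

lemma base_candidates_between:
  assumes "convex P" "s > 0" "t > 0"
    and "base_candidates P (x + s *\<^sub>R d) \<noteq> {}" "base_candidates P (x - t *\<^sub>R d) \<noteq> {}"
  shows "base_candidates P x \<noteq> {}"
proof -
  obtain k l where k: "k \<in> base_candidates P (x + s *\<^sub>R d)" and l: "l \<in> base_candidates P (x - t *\<^sub>R d)"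
    using assms(4,5) by blast
  define u where "u = s / (s + t)"
  have u: "0 \<le> u" "u \<le> 1" using assms(2,3) unfolding u_def by auto
  have "(1 - u) *\<^sub>R (x + s *\<^sub>R d) + u *\<^sub>R (x - t *\<^sub>R d) = x + ((1 - u) * s - u * t) *\<^sub>R d"
    by (simp add: algebra_simps)
  also have "(1 - u) * s - u * t = 0"
    using assms(2,3) unfolding u_def by (simp add: field_simps)
  finally show ?thesis
    using base_candidates_convex_combination[OF assms(1) k l u] by auto
qed

text \<open>The Minkowski decomposition \<open>P = K\<^sub>P + char.cone(P)\<close>, by induction on the number of slack
  constraints: a point \<open>x\<close> that is not a vertex lies on a line along which its tight constraints
  stay tight; pointedness guarantees that at least one direction of the line hits a new
  constraint, and the other one either does too or is a recession direction.\<close>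
lemma base_candidates_nonempty:
  fixes P :: "'a::euclidean_space set"
  assumes "polyhedron P" "pointed P" "p \<in> P"
  shows "base_candidates P p \<noteq> {}"
proof -
  obtain H :: "('a \<times> real) set" where fin: "finite H" and P: "P = {x. \<forall>h\<in>H. fst h \<bullet> x \<le> snd h}"
    using polyhedron_as_inequalities[OF assms(1)] by blast
  have cvx: "convex P" using assms(1) by (rule polyhedron_imp_convex)
  have "base_candidates P x \<noteq> {}" if "x \<in> P" for x
    using that
  proof (induction "card (slack H x)" arbitrary: x rule: less_induct)
    case less
    show ?case
    proof (cases "\<exists>z\<in>P. z \<noteq> x \<and> (\<forall>h\<in>H. fst h \<bullet> x = snd h \<longrightarrow> fst h \<bullet> z = snd h)")
      case False
      then have "x extreme_point_of P"
        by (intro extreme_point_of_inequalities[OF P less.prems]) blast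
      then have "x \<in> base_candidates P x"
        by (simp add: base_candidates_def KP_def vertices_def hull_inc)
      then show ?thesis by blast
    next
      case True
      then obtain z where "z \<in> P" "z \<noteq> x" and z_tight: "\<forall>h\<in>H. fst h \<bullet> x = snd h \<longrightarrow> fst h \<bullet> z = snd h"
        by blast
      define d where "d = z - x"
      have "d \<noteq> 0" using \<open>z \<noteq> x\<close> unfolding d_def by simp
      have advance: "\<exists>t>0. base_candidates P (x + t *\<^sub>R e) \<noteq> {}"
        if e: "e = d \<or> e = - d" "\<exists>h\<in>H. fst h \<bullet> e > 0" for e
      proof -
        have "\<forall>h\<in>H. fst h \<bullet> x = snd h \<longrightarrow> fst h \<bullet> e = 0"
          using z_tight e(1) unfolding d_def by (auto simp: inner_diff_right)
        then obtain t where "t > 0" "x + t *\<^sub>R e \<in> P" "card (slack H (x + t *\<^sub>R e)) < card (slack H x)"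
          using move_until_tight[OF fin P less.prems _ e(2)] by blast
        then show ?thesis using less.hyps by blast
      qed
      have one_sided: "base_candidates P x \<noteq> {}" if e: "e = d \<or> e = - d" "\<forall>h\<in>H. fst h \<bullet> e \<le> 0" for e
      proof -
        have e_cone: "e \<in> char_cone P" using char_cone_of_inequalities[OF P e(2)] .
        have "e \<noteq> 0" using \<open>d \<noteq> 0\<close> e(1) by auto
        then have "- e \<notin> char_cone P" using pointed_char_cone_uminus[OF assms(2) e_cone] by blast
        then have "\<exists>h\<in>H. fst h \<bullet> (- e) > 0"
          using char_cone_of_inequalities[OF P, of "- e"] by (meson not_less)
        moreover have "- e = d \<or> - e = - d" using e(1) by auto
        ultimately obtain t where t: "t > 0" "base_candidates P (x + t *\<^sub>R (- e)) \<noteq> {}"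
          using advance by blast
        then have "base_candidates P (x - t *\<^sub>R e) \<noteq> {}" by simp
        then show ?thesis by (rule base_candidates_behind[OF cvx e_cone less_imp_le[OF t(1)]])
      qed
      consider "\<forall>h\<in>H. fst h \<bullet> d \<le> 0" | "\<forall>h\<in>H. fst h \<bullet> (- d) \<le> 0"
        | "\<exists>h\<in>H. fst h \<bullet> d > 0" "\<exists>h\<in>H. fst h \<bullet> (- d) > 0"
        by (meson not_le)
      then show ?thesis
      proof cases
        case 1
        show ?thesis by (rule one_sided[OF _ 1]) simp
      next
        case 2
        show ?thesis by (rule one_sided[OF _ 2]) simp
      next
        case 3
        obtain s where "s > 0" "base_candidates P (x + s *\<^sub>R d) \<noteq> {}"
          using advance[of d] 3(1) by blast
        moreover obtain t where "t > 0" "base_candidates P (x - t *\<^sub>R d) \<noteq> {}"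
          using advance[of "- d"] 3(2) by auto
        ultimately show ?thesis using base_candidates_between[OF cvx] by blast
      qed
    qed
  qed
  then show ?thesis using assms(3) .
qed

section \<open>Base points\<close>

lemma closed_base_candidates:
  fixes P :: "'a::euclidean_space set"
  assumes "polyhedron P"
  shows "closed (base_candidates P p)"
proof -
  have "base_candidates P p = KP P \<inter> (\<lambda>x. p - x) -` char_cone P"
    unfolding base_candidates_def by auto
  moreover have "closed ((\<lambda>x. p - x) -` char_cone P)"
    using closed_char_cone[OF polyhedron_imp_closed[OF assms]]
    by (intro closed_vimage continuous_intros)
  ultimately show ?thesis
    using compact_imp_closed[OF compact_KP[OF assms]] by (simp add: closed_Int)
qed

lemma convex_base_candidates:
  assumes "convex P"
  shows "convex (base_candidates P p)"
proof (rule convexI)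
  fix x y and u v :: real
  assume x: "x \<in> base_candidates P p" and y: "y \<in> base_candidates P p"
    and "0 \<le> u" "0 \<le> v" "u + v = 1"
  then have u: "u = 1 - v" and "v \<le> 1" by linarith+
  have "(1 - v) *\<^sub>R x + v *\<^sub>R y \<in> base_candidates P ((1 - v) *\<^sub>R p + v *\<^sub>R p)"
    by (rule base_candidates_convex_combination[OF assms x y \<open>0 \<le> v\<close> \<open>v \<le> 1\<close>])
  moreover have "(1 - v) *\<^sub>R p + v *\<^sub>R p = p" by (simp add: algebra_simps)
  ultimately show "u *\<^sub>R x + v *\<^sub>R y \<in> base_candidates P p"
    unfolding u by simp
qed

lemma base_altdef:
  "base P p = (THE x. x \<in> base_candidates P p \<and> (\<forall>y\<in>base_candidates P p. norm (p - x) \<le> norm (p - y)))"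
  unfolding base_def base_candidates_def by (metis (lifting) mem_Collect_eq)

lemma base_eq_closest_point:
  fixes P :: "'a::euclidean_space set"
  assumes "polyhedron P" "pointed P" "p \<in> P"
  shows "base P p = closest_point (base_candidates P p) p"
proof -
  let ?S = "base_candidates P p"
  have S: "closed ?S" "convex ?S" "?S \<noteq> {}"
    using closed_base_candidates[OF assms(1)]
      convex_base_candidates[OF polyhedron_imp_convex[OF assms(1)]]
      base_candidates_nonempty[OF assms] .
  have "base P p = (THE x. x \<in> ?S \<and> (\<forall>y\<in>?S. dist p x \<le> dist p y))"
    unfolding base_altdef dist_norm ..
  also have "\<dots> = closest_point ?S p"
    using closest_point_exists[OF S(1,3)] closest_point_unique[OF S(2,1)] by (intro the_equality) auto
  finally show ?thesis .
qed

lemma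
  fixes P :: "'a::euclidean_space set"
  assumes "polyhedron P" "pointed P" "p \<in> P"
  shows base_in_base_candidates: "base P p \<in> base_candidates P p"
    and base_le: "y \<in> base_candidates P p \<Longrightarrow> norm (p - base P p) \<le> norm (p - y)"
    and base_unique: "x \<in> base_candidates P p \<Longrightarrow> (\<And>y. y \<in> base_candidates P p \<Longrightarrow> norm (p - x) \<le> norm (p - y))
      \<Longrightarrow> base P p = x"
  using closest_point_exists[OF closed_base_candidates base_candidates_nonempty]
    closest_point_unique[OF convex_base_candidates closed_base_candidates]
    polyhedron_imp_convex assms
  unfolding base_eq_closest_point[OF assms] dist_norm by metis+

section \<open>Faces\<close>

lemma KP_face:
  fixes P :: "'a::euclidean_space set"
  assumes "polyhedron P" "F face_of P"
  shows "KP F = KP P \<inter> F"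
proof
  have vertices_face: "vertices F = vertices P \<inter> F"
    unfolding vertices_def using extreme_point_of_face[OF assms(2)] by auto
  show "KP F \<subseteq> KP P \<inter> F"
    using KP_subset[OF face_of_imp_convex[OF assms(2)]] vertices_face
    unfolding KP_def by (auto intro: hull_mono[THEN subsetD])
  have "(F \<inter> KP P) face_of (P \<inter> KP P)"
    by (rule face_of_Int_Int[OF assms(2) face_of_refl[OF convex_KP]])
  then have "(F \<inter> KP P) face_of KP P"
    using KP_subset[OF polyhedron_imp_convex[OF assms(1)]] by (simp add: Int_absorb1)
  moreover have "compact (vertices P)"
    unfolding vertices_def using finite_polyhedron_extreme_points[OF assms(1)] by (rule finite_imp_compact)
  ultimately obtain S where S: "S \<subseteq> vertices P" "F \<inter> KP P = convex hull S"
    using face_of_convex_hull_subset[of "vertices P" "F \<inter> KP P"] unfolding KP_def by blast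
  then have "S \<subseteq> vertices F"
    using hull_subset[of S convex] vertices_face by blast
  then show "KP P \<inter> F \<subseteq> KP F"
    using S(2) unfolding KP_def by (metis hull_mono inf_commute)
qed

lemma char_cone_face_subset:
  fixes P :: "'a::real_normed_vector set"
  assumes "closed P" "convex P" "F face_of P" "F \<noteq> {}"
  shows "char_cone F \<subseteq> char_cone P"
proof
  fix c assume "c \<in> char_cone F"
  moreover obtain f where "f \<in> F" using assms(4) by blast
  ultimately have "f + of_nat n *\<^sub>R c \<in> P" for n
    using add_of_nat_scaleR_char_cone face_of_imp_subset[OF assms(3)] by blast
  then show "c \<in> char_cone P"
    using char_cone_of_ray[OF assms(1,2)] \<open>f \<in> F\<close> face_of_imp_subset[OF assms(3)] by blast
qed

text \<open>If \<open>x + c\<close> lies in a face \<open>F\<close> with \<open>c\<close> a recession direction, then \<open>x + c\<close> is the midpoint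
  of \<open>x\<close> and \<open>x + 2c\<close>; for \<open>f \<in> F\<close> the midpoint of \<open>f\<close> and \<open>x + 2c\<close> is also that of \<open>x\<close> and
  \<open>f + 2c\<close>, so \<open>f + 2c \<in> F\<close> and hence \<open>f + c \<in> F\<close>.\<close>
lemma face_char_cone_translate:
  assumes "F face_of P" "x \<in> P" "c \<in> char_cone P" "x + c \<in> F"
  shows "x \<in> F" "c \<in> char_cone F"
proof -
  have in_P: "y + c \<in> P" if "y \<in> P" for y
    using assms(3) that unfolding char_cone_def by blast
  have F_P: "F \<subseteq> P" using assms(1) by (rule face_of_imp_subset)
  have midpoint_F: "midpoint a b \<in> F" if "a \<in> F" "b \<in> F" for a b
    using closed_segment_subset[OF that face_of_imp_convex[OF assms(1)]] midpoint_in_closed_segment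
    by blast
  have face: "a \<in> F \<and> b \<in> F" if "a \<in> P" "b \<in> P" "a \<noteq> b" "midpoint a b \<in> F" for a b
    using assms(1) that midpoint_in_open_segment unfolding face_of_def by blast
  have mid: "midpoint y (y + c + c) = y + c" for y
    unfolding midpoint_def by (simp add: algebra_simps flip: scaleR_add_left)
  have "x \<in> F \<and> (\<forall>f\<in>F. f + c \<in> F)"
  proof (cases "c = 0")
    case False
    then have "x \<noteq> x + c + c"
      by (metis add.assoc add_cancel_left_right scaleR_2 scaleR_eq_0_iff zero_neq_numeral)
    then have x: "x \<in> F" and x2: "x + c + c \<in> F"
      using face[of x "x + c + c"] assms(2,4) in_P mid by auto
    have "f + c \<in> F" if f: "f \<in> F" for f
    proof -
      have f2: "f + c + c \<in> F"
      proof (cases "x = f + c + c")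
        case False
        have "midpoint x (f + c + c) = midpoint f (x + c + c)"
          unfolding midpoint_def by (simp add: add_ac)
        moreover have "midpoint f (x + c + c) \<in> F"
          using f x2 by (rule midpoint_F)
        ultimately show ?thesis
          using face[of x "f + c + c"] False assms(2) f F_P in_P by auto
      qed (use x in simp)
      show ?thesis using midpoint_F[OF f f2] mid[of f] by simp
    qed
    with x show ?thesis by blast
  qed (use assms(4) in simp)
  then show "x \<in> F" "c \<in> char_cone F" unfolding char_cone_def by auto
qed

lemma base_candidates_face:
  fixes P :: "'a::euclidean_space set"
  assumes "polyhedron P" "F face_of P" "p \<in> F"
  shows "base_candidates F p = base_candidates P p"
proof
  have "F \<noteq> {}" using assms(3) by blast
  then show "base_candidates F p \<subseteq> base_candidates P p"
    using KP_face[OF assms(1,2)] polyhedron_imp_closed[OF assms(1)] polyhedron_imp_convex[OF assms(1)]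
      char_cone_face_subset[OF _ _ assms(2)] unfolding base_candidates_def by blast
  show "base_candidates P p \<subseteq> base_candidates F p"
  proof
    fix x assume "x \<in> base_candidates P p"
    then have x: "x \<in> KP P" "p - x \<in> char_cone P" unfolding base_candidates_def by auto
    then have "x \<in> P" using KP_subset[OF polyhedron_imp_convex[OF assms(1)]] by blast
    then have "x \<in> F" "p - x \<in> char_cone F"
      using face_char_cone_translate[OF assms(2) _ x(2)] assms(3) by simp_all
    with x show "x \<in> base_candidates F p"
      unfolding base_candidates_def KP_face[OF assms(1,2)] by blast
  qed
qed

lemma base_face:
  fixes P :: "'a::euclidean_space set"
  assumes "polyhedron P" "F face_of P" "p \<in> F"
  shows "base F p = base P p"
  unfolding base_altdef base_candidates_face[OF assms] ..

section \<open>Continuity of the base map\<close>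

lemma base_in_KP:
  fixes P :: "'a::euclidean_space set"
  assumes "polyhedron P" "pointed P" "p \<in> P"
  shows "base P p \<in> KP P"
  using base_in_base_candidates[OF assms] unfolding base_candidates_def by blast

lemma convex_on_base_distance:
  fixes P :: "'a::euclidean_space set"
  assumes "polyhedron P" "pointed P"
  shows "convex_on P (\<lambda>p. norm (p - base P p))"
proof (rule convex_onI)
  show cvx: "convex P" using assms(1) by (rule polyhedron_imp_convex)
  fix s :: real and p q assume s: "0 < s" "s < 1" and p: "p \<in> P" and q: "q \<in> P"
  let ?z = "(1 - s) *\<^sub>R p + s *\<^sub>R q"
  let ?k = "(1 - s) *\<^sub>R base P p + s *\<^sub>R base P q"
  have "?z \<in> P" using convexD[OF cvx p q, of "1 - s" s] s by simp
  moreover have "?k \<in> base_candidates P ?z"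
    using s by (intro base_candidates_convex_combination[OF cvx]
        base_in_base_candidates[OF assms p] base_in_base_candidates[OF assms q]) auto
  ultimately have "norm (?z - base P ?z) \<le> norm (?z - ?k)"
    by (rule base_le[OF assms])
  also have "?z - ?k = (1 - s) *\<^sub>R (p - base P p) + s *\<^sub>R (q - base P q)"
    by (simp add: algebra_simps)
  also have "norm \<dots> \<le> (1 - s) * norm (p - base P p) + s * norm (q - base P q)"
    using s by (intro order.trans[OF norm_triangle_ineq]) simp
  finally show "norm (?z - base P ?z) \<le> (1 - s) * norm (p - base P p) + s * norm (q - base P q)" .
qed

lemma polyhedron_radial_extension:
  fixes P :: "'a::euclidean_space set"
  assumes "polyhedron P" "p \<in> P"
  obtains e where "e > 0"
    "\<And>q. q \<in> P \<Longrightarrow> q \<noteq> p \<Longrightarrow> norm (q - p) \<le> e \<Longrightarrow> p + (e / norm (q - p)) *\<^sub>R (q - p) \<in> P"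
proof -
  obtain H :: "('a \<times> real) set" where fin: "finite H" and P: "P = {x. \<forall>h\<in>H. fst h \<bullet> x \<le> snd h}"
    using polyhedron_as_inequalities[OF assms(1)] by blast
  define g where "g h = (snd h - fst h \<bullet> p) / (norm (fst h) + 1)" for h
  define e where "e = Min (insert 1 (g ` slack H p))"
  have fin_slack: "finite (slack H p)" using fin unfolding slack_def by simp
  have g_pos: "g h > 0" if "h \<in> slack H p" for h
    using that unfolding slack_def g_def by (simp add: add_nonneg_pos)
  have e: "e > 0" unfolding e_def using fin_slack g_pos by (subst Min_gr_iff) auto
  have e_le: "e \<le> g h" if "h \<in> slack H p" for h unfolding e_def using fin_slack that by simp
  have p_le: "fst h \<bullet> p \<le> snd h" if "h \<in> H" for h using assms(2) that unfolding P by blast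
  show ?thesis
  proof (rule that[OF e])
    fix q assume q: "q \<in> P" "q \<noteq> p" "norm (q - p) \<le> e"
    define \<mu> where "\<mu> = e / norm (q - p)"
    have \<mu>: "\<mu> \<ge> 0" "\<mu> * norm (q - p) = e" unfolding \<mu>_def using e q(2) by auto
    have "fst h \<bullet> p + \<mu> * (fst h \<bullet> (q - p)) \<le> snd h" if h: "h \<in> H" for h
    proof (cases "h \<in> slack H p")
      case True
      have "\<mu> * (fst h \<bullet> (q - p)) \<le> \<mu> * (norm (fst h) * norm (q - p))"
        using \<mu>(1) by (intro mult_left_mono norm_cauchy_schwarz)
      also have "\<dots> = norm (fst h) * e" using \<mu>(2) by (simp add: algebra_simps)
      also have "\<dots> \<le> norm (fst h) * g h" using e_le[OF True] by (simp add: mult_left_mono)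
      also have "\<dots> \<le> (norm (fst h) + 1) * g h" using g_pos[OF True] by simp
      also have "\<dots> = snd h - fst h \<bullet> p"
        using add_nonneg_pos[OF norm_ge_zero[of "fst h"] zero_less_one] unfolding g_def by simp
      finally show ?thesis by simp
    next
      case False
      then have "fst h \<bullet> p = snd h" using p_le[OF h] h unfolding slack_def by auto
      moreover have "fst h \<bullet> q \<le> snd h" using q(1) h unfolding P by blast
      ultimately have "\<mu> * (fst h \<bullet> (q - p)) \<le> 0"
        using \<mu>(1) by (simp add: inner_diff_right mult_nonneg_nonpos)
      then show ?thesis using p_le[OF h] by linarith
    qed
    then show "p + (e / norm (q - p)) *\<^sub>R (q - p) \<in> P"
      unfolding P \<mu>_def[symmetric] by (simp add: inner_add_right)
  qed
qed

text \<open>Convexity along the segment from \<open>p\<close> through \<open>q\<close>, prolonged to length \<open>e\<close>, whose endpoint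
  \<open>w\<close> satisfies \<open>|w - base\<^sub>P(w)| \<le> |p| + e + max |K\<^sub>P|\<close>.\<close>
lemma base_distance_upper_bound:
  fixes P :: "'a::euclidean_space set"
  assumes "polyhedron P" "pointed P" "p \<in> P"
  obtains e M where "e > 0"
    "\<And>q. q \<in> P \<Longrightarrow> norm (q - p) \<le> e \<Longrightarrow> norm (q - base P q) \<le> norm (p - base P p) + M * norm (q - p)"
proof -
  obtain e where e: "e > 0" and extend:
    "\<And>q. q \<in> P \<Longrightarrow> q \<noteq> p \<Longrightarrow> norm (q - p) \<le> e \<Longrightarrow> p + (e / norm (q - p)) *\<^sub>R (q - p) \<in> P"
    using polyhedron_radial_extension[OF assms(1,3)] by blast
  obtain B where B: "\<And>x. x \<in> KP P \<Longrightarrow> norm x \<le> B"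
    using compact_imp_bounded[OF compact_KP[OF assms(1)]] unfolding bounded_iff by blast
  define M where "M = (norm p + e + B) / e"
  show ?thesis
  proof (rule that[OF e])
    fix q assume q: "q \<in> P" "norm (q - p) \<le> e"
    show "norm (q - base P q) \<le> norm (p - base P p) + M * norm (q - p)"
    proof (cases "q = p")
      case False
      define s where "s = norm (q - p) / e"
      define w where "w = p + (e / norm (q - p)) *\<^sub>R (q - p)"
      have s: "0 \<le> s" "s \<le> 1" unfolding s_def using e q(2) by auto
      have w: "w \<in> P" unfolding w_def using extend[OF q(1) False q(2)] .
      have "(1 - s) *\<^sub>R p + s *\<^sub>R w = q"
        using e False by (simp add: w_def s_def algebra_simps)
      then have "norm (q - base P q) \<le> (1 - s) * norm (p - base P p) + s * norm (w - base P w)"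
        using convex_onD[OF convex_on_base_distance[OF assms(1,2)] s assms(3) w] by simp
      also have "\<dots> \<le> norm (p - base P p) + s * (norm p + e + B)"
      proof -
        have "norm (w - base P w) \<le> norm w + norm (base P w)" by (rule norm_triangle_ineq4)
        also have "norm w \<le> norm p + e"
          using norm_triangle_ineq[of p "(e / norm (q - p)) *\<^sub>R (q - p)"] e False by (simp add: w_def)
        finally have "norm (w - base P w) \<le> norm p + e + B"
          using B[OF base_in_KP[OF assms(1,2) w]] by linarith
        then show ?thesis
          using s by (smt (verit) mult_left_le_one_le mult_left_mono norm_ge_zero)
      qed
      also have "s * (norm p + e + B) = M * norm (q - p)"
        unfolding s_def M_def by simp
      finally show ?thesis .
    qed simp
  qed
qed

lemma base_limit:
  fixes P :: "'a::euclidean_space set"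
  assumes "polyhedron P" "pointed P"
    and q: "\<And>n. q n \<in> P" "q \<longlonglongrightarrow> p" and lim: "(\<lambda>n. base P (q n)) \<longlonglongrightarrow> x"
  shows "p \<in> P" "base P p = x"
proof -
  show p: "p \<in> P" using closed_sequentially[OF polyhedron_imp_closed[OF assms(1)] q] .
  have "q n - base P (q n) \<in> char_cone P" "base P (q n) \<in> KP P" for n
    using base_in_base_candidates[OF assms(1,2) q(1)] unfolding base_candidates_def by auto
  then have "p - x \<in> char_cone P" "x \<in> KP P"
    using closed_sequentially[OF closed_char_cone[OF polyhedron_imp_closed[OF assms(1)]] _ tendsto_diff[OF q(2) lim]]
      closed_sequentially[OF compact_imp_closed[OF compact_KP[OF assms(1)]] _ lim] by blast+
  then have x: "x \<in> base_candidates P p" unfolding base_candidates_def by simp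
  obtain e M where "e > 0" and bound:
    "\<And>q. q \<in> P \<Longrightarrow> norm (q - p) \<le> e \<Longrightarrow> norm (q - base P q) \<le> norm (p - base P p) + M * norm (q - p)"
    using base_distance_upper_bound[OF assms(1,2) p] by blast
  have "eventually (\<lambda>n. norm (q n - p) \<le> e) sequentially"
    using tendstoD[OF q(2) \<open>e > 0\<close>] by eventually_elim (simp add: dist_norm)
  then have "eventually (\<lambda>n. norm (q n - base P (q n)) \<le> norm (p - base P p) + M * norm (q n - p)) sequentially"
    by eventually_elim (rule bound[OF q(1)])
  moreover have "(\<lambda>n. norm (q n - base P (q n))) \<longlonglongrightarrow> norm (p - x)"
    by (intro tendsto_intros q(2) lim)
  moreover have "(\<lambda>n. norm (p - base P p) + M * norm (q n - p)) \<longlonglongrightarrow> norm (p - base P p) + M * norm (p - p)"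
    by (intro tendsto_intros q(2))
  ultimately have "norm (p - x) \<le> norm (p - base P p)"
    using tendsto_le[OF trivial_limit_sequentially] by fastforce
  then show "base P p = x"
    using base_unique[OF assms(1,2) p x] base_le[OF assms(1,2) p] by force
qed

lemma continuous_on_base:
  fixes P :: "'a::euclidean_space set"
  assumes "polyhedron P" "pointed P"
  shows "continuous_on P (base P)"
proof -
  have maps: "base P \<in> P \<rightarrow> KP P" using base_in_KP[OF assms] by blast
  have "closed ((\<lambda>p. (p, base P p)) ` P)"
    unfolding closed_sequential_limits
  proof (intro allI impI, elim conjE)
    fix z l assume z: "\<forall>n. z n \<in> (\<lambda>p. (p, base P p)) ` P" and "z \<longlonglongrightarrow> l"
    define q where "q n = fst (z n)" for n
    have zq: "q n \<in> P \<and> z n = (q n, base P (q n))" for n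
    proof -
      obtain y where "y \<in> P" "z n = (y, base P y)" using z by blast
      then show ?thesis unfolding q_def by simp
    qed
    have q_lim: "q \<longlonglongrightarrow> fst l"
      unfolding q_def using \<open>z \<longlonglongrightarrow> l\<close> by (rule tendsto_fst)
    have "(\<lambda>n. snd (z n)) = (\<lambda>n. base P (q n))"
      using zq by (simp add: fun_eq_iff)
    then have base_lim: "(\<lambda>n. base P (q n)) \<longlonglongrightarrow> snd l"
      using tendsto_snd[OF \<open>z \<longlonglongrightarrow> l\<close>] by simp
    have qP: "q n \<in> P" for n using zq by blast
    have "l = (fst l, base P (fst l))"
      using base_limit(2)[OF assms qP q_lim base_lim] by simp
    then show "l \<in> (\<lambda>p. (p, base P p)) ` P"
      using base_limit(1)[OF assms qP q_lim base_lim] by (rule image_eqI)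
  qed
  then have "closedin (top_of_set (P \<times> KP P)) ((\<lambda>p. (p, base P p)) ` P)"
    using maps by (intro closed_subset) auto
  then show ?thesis
    using continuous_closed_graph_eq[OF compact_KP[OF assms(1)] maps] by blast
qed

section \<open>Polyhedral complexes\<close>

lemma straight_line_strong_deformation_retraction:
  fixes r :: "'a::real_normed_vector \<Rightarrow> 'a"
  assumes "continuous_on X r" "r ` X \<subseteq> A" "A \<subseteq> X" "\<And>a. a \<in> A \<Longrightarrow> r a = a"
    and "\<And>x t. x \<in> X \<Longrightarrow> t \<in> {0..1} \<Longrightarrow> t *\<^sub>R r x + (1 - t) *\<^sub>R x \<in> X"
  shows "strong_deformation_retraction X A (\<lambda>(x, t). t *\<^sub>R r x + (1 - t) *\<^sub>R x)"
proof -
  have "continuous_on (X \<times> {0..1}) (\<lambda>z. snd z *\<^sub>R r (fst z) + (1 - snd z) *\<^sub>R fst z)"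
    by (intro continuous_intros continuous_on_compose2[OF assms(1)]) auto
  then have "continuous_on (X \<times> {0..1}) (\<lambda>(x, t). t *\<^sub>R r x + (1 - t) *\<^sub>R x)"
    by (simp add: case_prod_beta')
  moreover have "t *\<^sub>R a + (1 - t) *\<^sub>R a = a" for a :: 'a and t :: real
    by (simp flip: scaleR_add_left)
  ultimately show ?thesis
    using assms unfolding strong_deformation_retraction_def by auto
qed

locale pointed_polyhedral_complex =
  fixes \<C> :: "'a::euclidean_space set set"
  assumes complex: "polyhedral_complex \<C>" and pointed_cell: "\<And>P. P \<in> \<C> \<Longrightarrow> pointed P"
begin

lemma polyhedron_cell: "P \<in> \<C> \<Longrightarrow> polyhedron P"
  using complex unfolding polyhedral_complex_def by blast

lemma base_cells_eq:
  assumes "P \<in> \<C>" "Q \<in> \<C>" "p \<in> P \<inter> Q"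
  shows "base P p = base Q p"
proof -
  have "(P \<inter> Q) face_of P" "(P \<inter> Q) face_of Q"
    using complex assms(1,2) unfolding polyhedral_complex_def by blast+
  then show ?thesis
    using base_face[OF polyhedron_cell[OF assms(1)] _ assms(3)]
      base_face[OF polyhedron_cell[OF assms(2)] _ assms(3)] by simp
qed

lemma base_complex_eq: "P \<in> \<C> \<Longrightarrow> p \<in> P \<Longrightarrow> base_complex \<C> p = base P p"
  unfolding base_complex_def by (rule someI2[of "\<lambda>P. P \<in> \<C> \<and> p \<in> P"]) (auto intro: base_cells_eq)

lemma base_complex_in_cell_KP: "P \<in> \<C> \<Longrightarrow> p \<in> P \<Longrightarrow> base_complex \<C> p \<in> KP P"
  using base_in_KP[OF polyhedron_cell pointed_cell] by (simp add: base_complex_eq)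

lemma base_complex_in_com_part: "p \<in> \<Union>\<C> \<Longrightarrow> base_complex \<C> p \<in> \<Union>(com_part \<C>)"
  using base_complex_in_cell_KP face_of_refl[OF convex_KP] unfolding com_part_def by blast

lemma com_part_subset: "\<Union>(com_part \<C>) \<subseteq> \<Union>\<C>"
  using KP_subset[OF polyhedron_imp_convex[OF polyhedron_cell]] face_of_imp_subset
  unfolding com_part_def by blast

lemma base_complex_fixes_com_part:
  assumes "a \<in> \<Union>(com_part \<C>)"
  shows "base_complex \<C> a = a"
proof -
  obtain P F where P: "P \<in> \<C>" and "F face_of KP P" "a \<in> F"
    using assms unfolding com_part_def by blast
  then have a: "a \<in> KP P" using face_of_imp_subset by blast
  then have "a \<in> P" using KP_subset[OF polyhedron_imp_convex[OF polyhedron_cell[OF P]]] by blast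
  have "base P a = a"
    using a by (intro base_unique[OF polyhedron_cell[OF P] pointed_cell[OF P] \<open>a \<in> P\<close>])
      (auto simp: base_candidates_def)
  then show ?thesis using base_complex_eq[OF P \<open>a \<in> P\<close>] by simp
qed

lemma continuous_on_base_complex: "continuous_on (\<Union>\<C>) (base_complex \<C>)"
proof -
  have "continuous_on (\<Union>P\<in>\<C>. P) (base_complex \<C>)"
  proof (rule continuous_on_closed_Union)
    show "finite \<C>" using complex unfolding polyhedral_complex_def by blast
    fix P assume P: "P \<in> \<C>"
    show "closed P" using polyhedron_imp_closed[OF polyhedron_cell[OF P]] .
    show "continuous_on P (base_complex \<C>)"
      using continuous_on_base[OF polyhedron_cell[OF P] pointed_cell[OF P]]
      by (rule continuous_on_cong[THEN iffD1, rotated 2]) (simp_all add: base_complex_eq[OF P])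
  qed
  then show ?thesis by simp
qed

lemma segment_to_base_complex:
  assumes "p \<in> \<Union>\<C>" "t \<in> {0..1}"
  shows "t *\<^sub>R base_complex \<C> p + (1 - t) *\<^sub>R p \<in> \<Union>\<C>"
proof -
  obtain P where P: "P \<in> \<C>" "p \<in> P" using assms(1) by blast
  have "base_complex \<C> p \<in> P"
    using base_complex_in_cell_KP[OF P] KP_subset[OF polyhedron_imp_convex[OF polyhedron_cell[OF P(1)]]] by blast
  then have "t *\<^sub>R base_complex \<C> p + (1 - t) *\<^sub>R p \<in> P"
    using convexD[OF polyhedron_imp_convex[OF polyhedron_cell[OF P(1)]] _ P(2), of _ t "1 - t"] assms(2) by simp
  with P(1) show ?thesis by blast
qed

end

theorem mainTheorem12:
  fixes \<C> :: "'a::euclidean_space set set"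
  assumes "polyhedral_complex \<C>"
    and "\<forall>P\<in>\<C>. pointed P"
  shows "(\<forall>P1\<in>\<C>. \<forall>P2\<in>\<C>. \<forall>p\<in>P1 \<inter> P2. base P1 p = base P2 p)
       \<and> (\<forall>p\<in>\<Union>\<C>. base_complex \<C> p \<in> \<Union>(com_part \<C>))
       \<and> continuous_on (\<Union>\<C>) (base_complex \<C>)
       \<and> strong_deformation_retraction (\<Union>\<C>) (\<Union>(com_part \<C>))
           (\<lambda>(p, t). t *\<^sub>R base_complex \<C> p + (1 - t) *\<^sub>R p)"
proof -
  interpret pointed_polyhedral_complex \<C>
    using assms by unfold_locales auto
  have "strong_deformation_retraction (\<Union>\<C>) (\<Union>(com_part \<C>))
      (\<lambda>(p, t). t *\<^sub>R base_complex \<C> p + (1 - t) *\<^sub>R p)"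
    by (rule straight_line_strong_deformation_retraction[OF continuous_on_base_complex _
          com_part_subset base_complex_fixes_com_part segment_to_base_complex])
      (use base_complex_in_com_part in blast)
  then show ?thesis
    using base_cells_eq base_complex_in_com_part continuous_on_base_complex by blast
qed

end
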